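(* For all integers $a,b,c,d\in\mathbb Z$, the following are equivalent in the algebra $(\mathbb Z,+,\mathbb Z)$: (1) $a:b::_m c:d$; (2) there are $k,\ell,o,u\in\mathbb Z$ with $a=k+o$, $b=\ell+o$, $c=k+u$, $d=\ell+u$; (3) $a-b=c-d$.
   Context: $(\mathbb Z,+,\mathbb Z)$ is the algebra with universe $\mathbb Z$, binary addition, and every integer as a constant (0-ary operation). Terms are built from a variable set $X$, $+$ and integer constants; $X(s)$ denotes the variables of term $s$. A justification is a pair of terms $s\to t$ with $X(t)\subseteq X(s)$. Monolinear justifications are those in which $s$ and $t$ contain no variable other than one fixed variable $x$, and $x$ occurs at most once in $s$ and at most once in $t$. For $a,b\in\mathbb Z$, $\uparrow^m(a\to b)$ is the set of monolinear justifications $s\to t$ with $a=s(\mathbf o)$, $b=t(\mathbf o)$ for some value $\mathbf o$ of the variables; $\uparrow^m(a\to b:\!\cdot\,c\to d):=\uparrow^m(a\to b)\cap\uparrow^m(c\to d)$. A monolinear justification is trivial if it lies in $\uparrow^m(a'\to b':\!\cdot\,c'\to d')$ for all $a',b',c',d'$. The arrow proportion $a\to b:\!\cdot_m\,c\to d$ holds iff either (i) all justifications in $\uparrow^m(a\to b)\cup\uparrow^m(c\to d)$ are trivial, or (ii) $J_d:=\uparrow^m(a\to b:\!\cdot\,c\to d)$ contains a non-trivial justification and for every $d'$, $J_d\subseteq J_{d'}$ implies $J_{d'}$ contains a non-trivial justification and $J_{d'}\subseteq J_d$ (inclusions ignoring trivial justifications). Finally $a:b::_m c:d$ iff $a\to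 b:\!\cdot_m\,c\to d$, $b\to a:\!\cdot_m\,d\to c$, $c\to d:\!\cdot_m\,a\to b$ and $d\to c:\!\cdot_m\,b\to a$ all hold. *)

theory Defs
  imports Main
begin

datatype zterm = Var nat | Const int | Plus zterm zterm

primrec vars :: "zterm \<Rightarrow> nat set" where
  "vars (Var v) = {v}"
| "vars (Const k) = {}"
| "vars (Plus s t) = vars s \<union> vars t"

primrec occ :: "nat \<Rightarrow> zterm \<Rightarrow> nat" where
  "occ x (Var v) = (if v = x then 1 else 0)"
| "occ x (Const k) = 0"
| "occ x (Plus s t) = occ x s + occ x t"

primrec eval :: "(nat \<Rightarrow> int) \<Rightarrow> zterm \<Rightarrow> int" where
  "eval \<sigma> (Var v) = \<sigma> v"
| "eval \<sigma> (Const k) = k"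
| "eval \<sigma> (Plus s t) = eval \<sigma> s + eval \<sigma> t"

definition xvar :: nat where "xvar = 0"

definition monolinear :: "zterm \<times> zterm \<Rightarrow> bool" where
  "monolinear j \<longleftrightarrow> (case j of (s, t) \<Rightarrow>
      vars t \<subseteq> vars s \<and> vars s \<subseteq> {xvar} \<and> vars t \<subseteq> {xvar}
      \<and> occ xvar s \<le> 1 \<and> occ xvar t \<le> 1)"

definition up_m :: "int \<Rightarrow> int \<Rightarrow> (zterm \<times> zterm) set" where
  "up_m a b = {(s, t). monolinear (s, t) \<and> (\<exists>\<sigma>. a = eval \<sigma> s \<and> b = eval \<sigma> t)}"

definition up_m2 :: "int \<Rightarrow> int \<Rightarrow> int \<Rightarrow> int \<Rightarrow> (zterm \<times> zterm) set" where
  "up_m2 a b c d = up_m a b \<inter> up_m c d"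

definition trivial_m :: "zterm \<times> zterm \<Rightarrow> bool" where
  "trivial_m j \<longleftrightarrow> monolinear j \<and> (\<forall>a' b' c' d'. j \<in> up_m2 a' b' c' d')"

definition nontriv :: "(zterm \<times> zterm) set \<Rightarrow> (zterm \<times> zterm) set" where
  "nontriv J = {j \<in> J. \<not> trivial_m j}"

definition arrow_prop_m :: "int \<Rightarrow> int \<Rightarrow> int \<Rightarrow> int \<Rightarrow> bool" where
  "arrow_prop_m a b c d \<longleftrightarrow>
     (\<forall>j \<in> up_m a b \<union> up_m c d. trivial_m j)
   \<or> (nontriv (up_m2 a b c d) \<noteq> {} \<and>
      (\<forall>d'. nontriv (up_m2 a b c d) \<subseteq> nontriv (up_m2 a b c d') \<longrightarrow>
            nontriv (up_m2 a b c d') \<noteq> {} \<and>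
            nontriv (up_m2 a b c d') \<subseteq> nontriv (up_m2 a b c d)))"

definition analogy_m :: "int \<Rightarrow> int \<Rightarrow> int \<Rightarrow> int \<Rightarrow> bool" where
  "analogy_m a b c d \<longleftrightarrow> arrow_prop_m a b c d \<and> arrow_prop_m b a d c
     \<and> arrow_prop_m c d a b \<and> arrow_prop_m d c b a"

end

theory Submission
  imports Defs
begin

text \<open>A monolinear term evaluates to \<open>p * o + k\<close> with \<open>p \<in> {0, 1}\<close>, and \<open>X(t) \<subseteq> X(s)\<close>
  forces \<open>p\<^sub>t \<le> p\<^sub>s\<close>. So a justification \<open>s \<rightarrow> t\<close> either contains \<open>x\<close> on both sides, and
  then it shifts every value by the same constant, or its right-hand side is a constant.
  Hence a justification shared by \<open>a \<rightarrow> b\<close> and \<open>c \<rightarrow> d\<close> forces \<open>a - b = c - d\<close> or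
  \<open>b = d\<close>. The constant justification \<open>a \<rightarrow> b\<close> is non-trivial, which rules out the first
  alternative of the arrow proportion, so the second one requires such a shared justification; combined with the symmetric arrow proportion
  \<open>b \<rightarrow> a :\<cdot> d \<rightarrow> c\<close> this gives \<open>a - b = c - d\<close>. Conversely, if \<open>a - b = c - d\<close>, the
  translation \<open>x \<rightarrow> x + (b - a)\<close> is shared, and it determines \<open>d\<close> uniquely.\<close>

lemma eval_linear_in_var:
  assumes "vars s \<subseteq> {x}"
  shows "eval \<sigma> s = int (occ x s) * \<sigma> x + eval (\<lambda>_. 0) s"
  using assms by (induction s) (auto simp: algebra_simps)

lemma occ_eq_0_iff_notin_vars: "occ x s = 0 \<longleftrightarrow> x \<notin> vars s"
  by (induction s) auto

lemma monolinear_cases: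
  assumes "monolinear (s, t)"
  obtains (shift) "occ xvar s = 1" "occ xvar t = 1"
        | (const_rhs) "occ xvar t = 0"
proof -
  from assms have "vars t \<subseteq> vars s" "occ xvar s \<le> 1" "occ xvar t \<le> 1"
    unfolding monolinear_def by auto
  then show ?thesis
    using that occ_eq_0_iff_notin_vars[of xvar s] occ_eq_0_iff_notin_vars[of xvar t]
    by (cases "occ xvar t") auto
qed

lemma shared_justification_diff_eq_or_eq:
  assumes "j \<in> up_m a b" "j \<in> up_m c d"
  shows "a - b = c - d \<or> b = d"
proof -
  obtain s t where j: "j = (s, t)" by (cases j)
  from assms obtain \<sigma> \<tau> where mono: "monolinear (s, t)"
    and vals: "a = eval \<sigma> s" "b = eval \<sigma> t" "c = eval \<tau> s" "d = eval \<tau> t"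
    unfolding up_m_def j by auto
  from mono have "vars s \<subseteq> {xvar}" "vars t \<subseteq> {xvar}"
    unfolding monolinear_def by auto
  then have lin:
    "eval \<sigma> s = int (occ xvar s) * \<sigma> xvar + eval (\<lambda>_. 0) s"
    "eval \<sigma> t = int (occ xvar t) * \<sigma> xvar + eval (\<lambda>_. 0) t"
    "eval \<tau> s = int (occ xvar s) * \<tau> xvar + eval (\<lambda>_. 0) s"
    "eval \<tau> t = int (occ xvar t) * \<tau> xvar + eval (\<lambda>_. 0) t"
    by (blast intro: eval_linear_in_var)+
  from mono show ?thesis
  proof (cases rule: monolinear_cases)
    case shift
    then have "a - b = c - d" using vals lin by simp
    then show ?thesis ..
  next
    case const_rhs
    then have "b = d" using vals lin by simp
    then show ?thesis ..
  qed
qed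

lemma const_justification_in_up_m: "(Const a, Const b) \<in> up_m a b"
  unfolding up_m_def monolinear_def by auto

lemma const_justification_nontrivial: "\<not> trivial_m (Const a, Const b)"
  unfolding trivial_m_def up_m2_def up_m_def by (auto intro!: exI[of _ "a + 1"])

lemma arrow_prop_m_imp_diff_eq_or_eq:
  assumes "arrow_prop_m a b c d"
  shows "a - b = c - d \<or> b = d"
proof -
  have "nontriv (up_m2 a b c d) \<noteq> {}"
    using assms const_justification_in_up_m const_justification_nontrivial
    unfolding arrow_prop_m_def by blast
  then obtain j where "j \<in> up_m a b" "j \<in> up_m c d"
    unfolding nontriv_def up_m2_def by auto
  then show ?thesis by (rule shared_justification_diff_eq_or_eq)
qed

definition translation :: "int \<Rightarrow> zterm \<times> zterm" where
  "translation k = (Var xvar, Plus (Var xvar) (Const k))"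

lemma translation_in_up_m_iff: "translation k \<in> up_m a b \<longleftrightarrow> b - a = k"
proof
  assume "translation k \<in> up_m a b"
  then show "b - a = k" unfolding up_m_def translation_def by auto
next
  assume "b - a = k"
  then have "a = eval (\<lambda>_. a) (Var xvar) \<and> b = eval (\<lambda>_. a) (Plus (Var xvar) (Const k))"
    by simp
  then show "translation k \<in> up_m a b"
    unfolding up_m_def translation_def monolinear_def by auto
qed

lemma translation_nontrivial: "\<not> trivial_m (translation k)"
  using translation_in_up_m_iff[of k 0 "k + 1"] unfolding trivial_m_def up_m2_def by auto

lemma arrow_prop_m_if_diff_eq:
  assumes "a - b = c - d"
  shows "arrow_prop_m a b c d"
proof -
  have common: "translation (b - a) \<in> nontriv (up_m2 a b c d)"
    using assms translation_in_up_m_iff translation_nontrivial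
    unfolding nontriv_def up_m2_def by auto
  have "d' = d" if "nontriv (up_m2 a b c d) \<subseteq> nontriv (up_m2 a b c d')" for d'
  proof -
    have "translation (b - a) \<in> up_m c d'"
      using that common unfolding nontriv_def up_m2_def by blast
    then show ?thesis using assms translation_in_up_m_iff by simp
  qed
  then show ?thesis
    using common unfolding arrow_prop_m_def by blast
qed

lemma analogy_m_iff_diff_eq: "analogy_m a b c d \<longleftrightarrow> a - b = c - d"
proof
  assume "analogy_m a b c d"
  then have "arrow_prop_m a b c d" "arrow_prop_m b a d c"
    unfolding analogy_m_def by auto
  from this[THEN arrow_prop_m_imp_diff_eq_or_eq] show "a - b = c - d"
    by auto
next
  assume "a - b = c - d"
  then show "analogy_m a b c d"
    unfolding analogy_m_def by (auto intro!: arrow_prop_m_if_diff_eq)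
qed

lemma common_decomposition_iff_diff_eq:
  fixes a b c d :: int
  shows "(\<exists>k l ov u. a = k + ov \<and> b = l + ov \<and> c = k + u \<and> d = l + u) \<longleftrightarrow> a - b = c - d"
proof
  assume "a - b = c - d"
  then have "a = a + 0 \<and> b = b + 0 \<and> c = a + (c - a) \<and> d = b + (c - a)"
    by simp
  then show "\<exists>k l ov u. a = k + ov \<and> b = l + ov \<and> c = k + u \<and> d = l + u"
    by blast
qed auto

theorem mainTheorem4:
  fixes a b c d :: int
  shows "(analogy_m a b c d \<longleftrightarrow> (\<exists>k l ov u. a = k + ov \<and> b = l + ov \<and> c = k + u \<and> d = l + u))
       \<and> ((\<exists>k l ov u. a = k + ov \<and> b = l + ov \<and> c = k + u \<and> d = l + u) \<longleftrightarrow> a - b = c - d)"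
  using analogy_m_iff_diff_eq common_decomposition_iff_diff_eq by blast

end
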